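(* Let $\mathcal{X}\subseteq\mathcal{B}(0,R)$ be compact convex, let $\mathcal{Z}$ be a set and $f:\mathcal{X}\times\mathcal{Z}\to\mathbb{R}$ with $f(\cdot,z)\in\mathcal{F}^0_{\mathcal{X}}(L)$ for every $z$. Consider full-batch gradient descent: given $S=(z_1,\dots,z_n)\in\mathcal{Z}^n$, a number of iterations $T$ and step sizes $(\eta_t)_{t\in[T]}$, start from an initial point $x^1\in\mathcal{X}$ (the same for all datasets), set $x^{t+1}=\mathsf{Proj}_{\mathcal{X}}(x^t-\eta_t\nabla F_S(x^t))$ for $t=1,\dots,T-1$, and output $\mathcal{A}_{\sf GD}(S)=\bar x^T=\frac{1}{\sum_{t\in[T]}\eta_t}\sum_{t\in[T]}\eta_t x^t$. Then $$\sup_{S\simeq S'}\|\mathcal{A}_{\sf GD}(S)-\mathcal{A}_{\sf GD}(S')\|\le\min\Big\{2R,\;4L\Big(\frac1n\sum_{t=1}^{T-1}\eta_t+\sqrt{\sum_{t=1}^{T-1}\eta_t^2}\Big)\Big\}.$$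
   Context: $\|\cdot\|$ is the Euclidean norm on $\mathbb{R}^d$, $\mathcal{B}(0,R)$ the Euclidean ball of radius $R$, $\mathsf{Proj}_{\mathcal{X}}$ the Euclidean projection. $\mathcal{F}^0_{\mathcal{X}}(L)$ is the class of convex $L$-Lipschitz functions on $\mathcal{X}$ (Lipschitz on an open set containing $\mathcal{X}$, so subgradients have norm at most $L$). $\nabla f(x,z)$ is a fixed arbitrary selection of a subgradient of $f(\cdot,z)$ at $x$, and $\nabla F_S(x)=\frac1n\sum_{i=1}^n\nabla f(x,z_i)$ where $F_S(x)=\frac1n\sum_i f(x,z_i)$. Datasets $S,S'\in\mathcal{Z}^n$ are neighboring, $S\simeq S'$, if they differ in at most one entry. *)

theory Defs
  imports "HOL-Analysis.Analysis"
begin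

definition is_subgradient :: "'a::real_inner set \<Rightarrow> ('a \<Rightarrow> real) \<Rightarrow> 'a \<Rightarrow> 'a \<Rightarrow> bool" where
  "is_subgradient X h x v \<longleftrightarrow> (\<forall>y\<in>X. h y \<ge> h x + inner v (y - x))"

definition emp_grad :: "('a::real_vector \<Rightarrow> 'z \<Rightarrow> 'a) \<Rightarrow> 'z list \<Rightarrow> 'a \<Rightarrow> 'a" where
  "emp_grad g S x = (1 / real (length S)) *\<^sub>R (\<Sum>i<length S. g x (S ! i))"

text \<open>gd_seq ... k is the iterate x^(k+1): x^1 = x1,
  x^(t+1) = Proj_X (x^t - eta_t * grad F_S(x^t)).\<close>
primrec gd_seq :: "'a::euclidean_space set \<Rightarrow> ('a \<Rightarrow> 'z \<Rightarrow> 'a) \<Rightarrow> 'z list \<Rightarrow> (nat \<Rightarrow> real) \<Rightarrow> 'a \<Rightarrow> nat \<Rightarrow> 'a" where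
  "gd_seq X g S \<eta> x1 0 = x1"
| "gd_seq X g S \<eta> x1 (Suc k) =
     closest_point X (gd_seq X g S \<eta> x1 k - \<eta> (Suc k) *\<^sub>R emp_grad g S (gd_seq X g S \<eta> x1 k))"

definition A_GD :: "'a::euclidean_space set \<Rightarrow> ('a \<Rightarrow> 'z \<Rightarrow> 'a) \<Rightarrow> (nat \<Rightarrow> real) \<Rightarrow> 'a \<Rightarrow> nat \<Rightarrow> 'z list \<Rightarrow> 'a" where
  "A_GD X g \<eta> x1 T S =
     (1 / (\<Sum>t=1..T. \<eta> t)) *\<^sub>R (\<Sum>t=1..T. \<eta> t *\<^sub>R gd_seq X g S \<eta> x1 (t - 1))"

definition neighboring :: "'z list \<Rightarrow> 'z list \<Rightarrow> bool" where
  "neighboring S S' \<longleftrightarrow> length S = length S' \<and> card {i. i < length S \<and> S ! i \<noteq> S' ! i} \<le> 1"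

end

theory Submission
  imports Defs
begin

text \<open>Run gradient descent on neighbouring datasets S and S' from the same starting point and let
  delta(t) be the distance between the t-th iterates. The projection onto X is nonexpansive and
  subgradients of a convex function are monotone, so the n - 1 samples shared by S and S' cannot
  push the iterates apart; the one differing sample perturbs the cross term by at most
  (2L/n) delta(t), and the two empirical gradients differ by at most 2L. Expanding the square gives
  delta(t+1)^2 \<le> delta(t)^2 + (4L eta(t)/n) delta(t) + 4L^2 eta(t)^2, which by induction yields
  delta(t) \<le> (4L/n) sum_{s<t} eta(s) + 2L sqrt(sum_{s<t} eta(s)^2). Averaging the iterates
  preserves this bound, and 2R bounds the distance between any two points of the ball of radius R.\<close>

lemma sqrt_growth_step:
  fixes d d' B b e M Q :: real
  assumes "0 \<le> d" "0 \<le> d'" "0 \<le> B" "0 \<le> b" "0 \<le> e" "0 \<le> M" "0 \<le> Q"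
    and d: "d \<le> B + M * sqrt Q"
    and d': "d'\<^sup>2 \<le> d\<^sup>2 + b * e * d + M\<^sup>2 * e\<^sup>2"
  shows "d' \<le> B + b * e + M * sqrt (Q + e\<^sup>2)"
proof -
  define s s' where "s = sqrt Q" and "s' = sqrt (Q + e\<^sup>2)"
  have "0 \<le> s" "s \<le> s'" and s'_sq: "s'\<^sup>2 = s\<^sup>2 + e\<^sup>2"
    using \<open>0 \<le> Q\<close> by (simp_all add: s_def s'_def real_sqrt_le_mono)
  have "d\<^sup>2 \<le> (B + M * s)\<^sup>2"
    using d \<open>0 \<le> d\<close> unfolding s_def by (rule power_mono)
  moreover have "b * e * d \<le> b * e * (B + M * s)"
    using d assms(4,5) unfolding s_def by (simp add: mult_left_mono)
  ultimately have "d'\<^sup>2 \<le> (B + M * s)\<^sup>2 + b * e * (B + M * s) + M\<^sup>2 * e\<^sup>2"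
    using d' by linarith
  also have "\<dots> \<le> (B + b * e + M * s')\<^sup>2"
  proof -
    define P P' c where "P = B + M * s" and "P' = B + M * s'" and "c = b * e"
    have "P'\<^sup>2 = P\<^sup>2 + M\<^sup>2 * e\<^sup>2 + 2 * B * M * (s' - s)"
      by (simp add: P_def P'_def power2_sum power_mult_distrib s'_sq algebra_simps)
    moreover have "0 \<le> 2 * B * M * (s' - s)"
      using \<open>s \<le> s'\<close> assms(3,6) by simp
    moreover have "c * P \<le> c * P'"
      using \<open>s \<le> s'\<close> assms(4-6) by (simp add: P_def P'_def c_def mult_left_mono)
    moreover have "0 \<le> c * P'"
      using \<open>0 \<le> s\<close> \<open>s \<le> s'\<close> assms(3-6) by (simp add: P'_def c_def)
    moreover have "(B + b * e + M * s')\<^sup>2 = P'\<^sup>2 + 2 * (c * P') + c\<^sup>2"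
      by (simp add: P'_def c_def power2_eq_square algebra_simps)
    ultimately show ?thesis
      unfolding P_def[symmetric] c_def[symmetric] using zero_le_power2[of c] by linarith
  qed
  finally have "d'\<^sup>2 \<le> (B + b * e + M * s')\<^sup>2" .
  moreover have "0 \<le> B + b * e + M * s'"
    using \<open>0 \<le> s\<close> \<open>s \<le> s'\<close> assms(3-6) by simp
  ultimately show ?thesis
    unfolding s'_def by (rule power2_le_imp_le)
qed

lemma weighted_average_norm_le:
  fixes v :: "'b \<Rightarrow> 'a::real_normed_vector"
  assumes "0 < sum w A" "\<And>t. t \<in> A \<Longrightarrow> 0 \<le> w t" "\<And>t. t \<in> A \<Longrightarrow> norm (v t) \<le> K"
  shows "norm ((1 / sum w A) *\<^sub>R (\<Sum>t\<in>A. w t *\<^sub>R v t)) \<le> K"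
proof -
  have "norm (\<Sum>t\<in>A. w t *\<^sub>R v t) \<le> (\<Sum>t\<in>A. w t * K)"
    by (rule sum_norm_le) (use assms(2,3) in \<open>auto intro: mult_left_mono\<close>)
  also have "\<dots> = sum w A * K"
    by (simp add: sum_distrib_right)
  finally show ?thesis
    using assms(1) by (simp add: field_simps)
qed

lemma sum_ge_neg_if_one_exception:
  fixes h :: "'b \<Rightarrow> real"
  assumes "finite A" "D \<subseteq> A" "card D \<le> 1" "0 \<le> c"
    and "\<And>j. j \<in> A \<Longrightarrow> j \<notin> D \<Longrightarrow> 0 \<le> h j" "\<And>j. j \<in> D \<Longrightarrow> - c \<le> h j"
  shows "- c \<le> sum h A"
proof -
  have "- (real (card D) * c) \<le> sum h D"
    using sum_mono[of D "\<lambda>_. - c" h] assms(6) by simp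
  moreover have "real (card D) * c \<le> c"
    using assms(3,4) by (simp add: mult_left_le_one_le)
  moreover have "0 \<le> sum h (A - D)"
    using assms(5) by (intro sum_nonneg) auto
  moreover have "sum h A = sum h (A - D) + sum h D"
    using assms(2,1) by (rule sum.subset_diff)
  ultimately show ?thesis
    by linarith
qed

lemma is_subgradient_monotone:
  assumes "is_subgradient X h x u" "is_subgradient X h y v" "x \<in> X" "y \<in> X"
  shows "0 \<le> inner (x - y) (u - v)"
proof -
  have "h y \<ge> h x + inner u (y - x)" "h x \<ge> h y + inner v (x - y)"
    using assms unfolding is_subgradient_def by blast+
  then show ?thesis
    by (simp add: inner_diff_left inner_diff_right inner_commute)
qed

lemma norm_emp_grad_le:
  assumes "S \<noteq> []" "\<And>z. z \<in> set S \<Longrightarrow> norm (g x z) \<le> L"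
  shows "norm (emp_grad g S x) \<le> L"
proof -
  have "norm (\<Sum>i<length S. g x (S ! i)) \<le> (\<Sum>i<length S. L)"
    by (rule sum_norm_le) (simp add: assms(2))
  then show ?thesis
    using assms(1) by (simp add: emp_grad_def field_simps)
qed

lemma gd_seq_in: "closed X \<Longrightarrow> x1 \<in> X \<Longrightarrow> gd_seq X g S \<eta> x1 k \<in> X"
  by (induction k) (auto intro: closest_point_in_set)

lemma norm_A_GD_le:
  assumes "closed X" "X \<subseteq> cball 0 R" "x1 \<in> X" "T \<ge> 1" "\<And>t. t \<in> {1..T} \<Longrightarrow> 0 < \<eta> t"
  shows "norm (A_GD X g \<eta> x1 T S) \<le> R"
  unfolding A_GD_def
proof (rule weighted_average_norm_le)
  show "0 < sum \<eta> {1..T}"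
    using assms(4,5) by (intro sum_pos) auto
  show "0 \<le> \<eta> t" if "t \<in> {1..T}" for t
    using assms(5)[OF that] by simp
  show "norm (gd_seq X g S \<eta> x1 (t - 1)) \<le> R" for t
    using gd_seq_in[OF assms(1,3)] assms(2) by (meson mem_cball_0 subsetD)
qed

locale gd_stability =
  fixes X :: "'a::euclidean_space set" and Z :: "'z set"
    and f :: "'a \<Rightarrow> 'z \<Rightarrow> real" and g :: "'a \<Rightarrow> 'z \<Rightarrow> 'a" and L :: real
  assumes closed: "closed X" and convex: "convex X"
    and subgradient: "\<And>x z. x \<in> X \<Longrightarrow> z \<in> Z \<Longrightarrow> is_subgradient X (\<lambda>y. f y z) x (g x z)"
    and grad_bound: "\<And>x z. x \<in> X \<Longrightarrow> z \<in> Z \<Longrightarrow> norm (g x z) \<le> L"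
begin

lemma grad_bound_nonneg: "x \<in> X \<Longrightarrow> z \<in> Z \<Longrightarrow> 0 \<le> L"
  using grad_bound norm_ge_zero order_trans by blast

lemma inner_emp_grad_diff_ge:
  assumes S: "S \<in> lists Z" "S' \<in> lists Z" "neighboring S S'" "S \<noteq> []" and "x \<in> X" "y \<in> X"
  shows "- (2 * L / length S) * norm (x - y) \<le> inner (x - y) (emp_grad g S x - emp_grad g S' y)"
proof -
  let ?n = "length S"
  define D where "D = {j. j < ?n \<and> S ! j \<noteq> S' ! j}"
  define h where "h j = inner (x - y) (g x (S ! j) - g y (S' ! j))" for j
  have len: "length S' = ?n"
    using S(3) by (simp add: neighboring_def)
  have samples: "S ! j \<in> Z" "S' ! j \<in> Z" if "j < ?n" for j
    using S(1,2) that len by (auto simp: in_lists_conv_set)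
  have "D \<subseteq> {..<?n}" "card D \<le> 1"
    using S(3) by (auto simp: D_def neighboring_def)
  moreover have "0 \<le> h j" if "j < ?n" "j \<notin> D" for j
  proof -
    have "S' ! j = S ! j"
      using that by (simp add: D_def)
    then show ?thesis
      unfolding h_def using is_subgradient_monotone subgradient samples(1)[OF \<open>j < ?n\<close>] \<open>x \<in> X\<close> \<open>y \<in> X\<close>
      by metis
  qed
  moreover have "- (2 * L * norm (x - y)) \<le> h j" if "j \<in> D" for j
  proof -
    have j: "j < ?n"
      using that by (simp add: D_def)
    have "norm (g x (S ! j) - g y (S' ! j)) \<le> 2 * L"
      using grad_bound[OF \<open>x \<in> X\<close> samples(1)[OF j]] grad_bound[OF \<open>y \<in> X\<close> samples(2)[OF j]]
        norm_triangle_ineq4[of "g x (S ! j)" "g y (S' ! j)"]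
      by linarith
    then have "\<bar>h j\<bar> \<le> 2 * L * norm (x - y)"
      using Cauchy_Schwarz_ineq2[of "x - y" "g x (S ! j) - g y (S' ! j)"]
        mult_right_mono[of _ "2 * L" "norm (x - y)"]
      unfolding h_def by (metis mult.commute norm_ge_zero order_trans)
    then show ?thesis
      by linarith
  qed
  moreover have "0 \<le> 2 * L * norm (x - y)"
    using grad_bound_nonneg[OF \<open>x \<in> X\<close> samples(1)[of 0]] S(4) by simp
  ultimately have "- (2 * L * norm (x - y)) \<le> (\<Sum>j<?n. h j)"
    by (intro sum_ge_neg_if_one_exception) auto
  moreover have "inner (x - y) (emp_grad g S x - emp_grad g S' y) = (1 / ?n) * (\<Sum>j<?n. h j)"
    unfolding emp_grad_def h_def len
    by (simp add: inner_diff_right inner_sum_right sum_subtractf diff_divide_distrib)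
  ultimately show ?thesis
    using S(4) by (simp add: field_simps)
qed

lemma dist_gd_step_sq_le:
  assumes S: "S \<in> lists Z" "S' \<in> lists Z" "neighboring S S'" "S \<noteq> []"
    and "x \<in> X" "y \<in> X" "0 \<le> e"
  shows "(norm (closest_point X (x - e *\<^sub>R emp_grad g S x) - closest_point X (y - e *\<^sub>R emp_grad g S' y)))\<^sup>2
    \<le> (norm (x - y))\<^sup>2 + (4 * L / length S) * e * norm (x - y) + (2 * L)\<^sup>2 * e\<^sup>2"
    (is "(norm (?x' - ?y'))\<^sup>2 \<le> _")
proof -
  define d V where "d = x - y" and "V = emp_grad g S x - emp_grad g S' y"
  have "S' \<noteq> []"
    using S(3,4) by (auto simp: neighboring_def)
  have "norm V \<le> 2 * L"
    using norm_emp_grad_le[OF S(4), of g x L] norm_emp_grad_le[OF \<open>S' \<noteq> []\<close>, of g y L]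
      grad_bound \<open>x \<in> X\<close> \<open>y \<in> X\<close> S(1,2) norm_triangle_ineq4[of "emp_grad g S x" "emp_grad g S' y"]
    unfolding V_def in_lists_conv_set by fastforce
  have "(x - e *\<^sub>R emp_grad g S x) - (y - e *\<^sub>R emp_grad g S' y) = d - e *\<^sub>R V"
    by (simp add: d_def V_def algebra_simps)
  then have "norm (?x' - ?y') \<le> norm (d - e *\<^sub>R V)"
    using closest_point_lipschitz[OF convex closed, of "x - e *\<^sub>R emp_grad g S x" "y - e *\<^sub>R emp_grad g S' y"]
      \<open>x \<in> X\<close> by (auto simp: dist_norm)
  then have "(norm (?x' - ?y'))\<^sup>2 \<le> (norm (d - e *\<^sub>R V))\<^sup>2"
    by (simp add: power_mono)
  also have "\<dots> = (norm d)\<^sup>2 - 2 * e * inner d V + e\<^sup>2 * (norm V)\<^sup>2"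
    unfolding power2_norm_eq_inner
    by (simp add: inner_diff_left inner_diff_right inner_commute power2_eq_square algebra_simps)
  also have "\<dots> \<le> (norm d)\<^sup>2 + (4 * L / length S) * e * norm d + (2 * L)\<^sup>2 * e\<^sup>2"
  proof -
    have "- (2 * L / length S) * norm d \<le> inner d V"
      unfolding d_def V_def using S \<open>x \<in> X\<close> \<open>y \<in> X\<close> by (rule inner_emp_grad_diff_ge)
    then have "- 2 * e * inner d V \<le> (4 * L / length S) * e * norm d"
      using mult_left_mono[of _ _ "2 * e"] \<open>0 \<le> e\<close> by (fastforce simp: algebra_simps)
    moreover have "(norm V)\<^sup>2 \<le> (2 * L)\<^sup>2"
      using \<open>norm V \<le> 2 * L\<close> norm_ge_zero by (rule power_mono)
    then have "e\<^sup>2 * (norm V)\<^sup>2 \<le> e\<^sup>2 * (2 * L)\<^sup>2"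
      by (simp add: mult_left_mono)
    moreover have "e\<^sup>2 * (2 * L)\<^sup>2 = (2 * L)\<^sup>2 * e\<^sup>2"
      by (rule mult.commute)
    ultimately show ?thesis
      by linarith
  qed
  finally show ?thesis
    unfolding d_def .
qed

lemma dist_gd_seq_le:
  assumes S: "S \<in> lists Z" "S' \<in> lists Z" "neighboring S S'" "S \<noteq> []"
    and "x1 \<in> X" and "\<And>t. t \<in> {1..k} \<Longrightarrow> 0 \<le> \<eta> t"
  shows "norm (gd_seq X g S \<eta> x1 k - gd_seq X g S' \<eta> x1 k)
    \<le> (4 * L / length S) * (\<Sum>t=1..k. \<eta> t) + 2 * L * sqrt (\<Sum>t=1..k. (\<eta> t)\<^sup>2)"
  using assms(6)
proof (induction k)
  case 0
  then show ?case
    by simp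
next
  case (Suc k)
  define x y where "x = gd_seq X g S \<eta> x1 k" and "y = gd_seq X g S' \<eta> x1 k"
  have "x \<in> X" "y \<in> X"
    unfolding x_def y_def using closed \<open>x1 \<in> X\<close> by (simp_all add: gd_seq_in)
  have "0 \<le> L"
    using grad_bound_nonneg[OF \<open>x \<in> X\<close>] S(1,4) by (auto simp: neq_Nil_conv)
  have \<eta>: "0 \<le> \<eta> (Suc k)" "0 \<le> (\<Sum>t=1..k. \<eta> t)"
    using Suc.prems by (auto intro: sum_nonneg)
  have "norm (gd_seq X g S \<eta> x1 (Suc k) - gd_seq X g S' \<eta> x1 (Suc k))
    \<le> (4 * L / length S) * (\<Sum>t=1..k. \<eta> t) + (4 * L / length S) * \<eta> (Suc k)
      + 2 * L * sqrt ((\<Sum>t=1..k. (\<eta> t)\<^sup>2) + (\<eta> (Suc k))\<^sup>2)"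
  proof (rule sqrt_growth_step)
    show "norm (x - y) \<le> (4 * L / length S) * (\<Sum>t=1..k. \<eta> t) + 2 * L * sqrt (\<Sum>t=1..k. (\<eta> t)\<^sup>2)"
      unfolding x_def y_def using Suc by simp
    show "(norm (gd_seq X g S \<eta> x1 (Suc k) - gd_seq X g S' \<eta> x1 (Suc k)))\<^sup>2
      \<le> (norm (x - y))\<^sup>2 + (4 * L / length S) * \<eta> (Suc k) * norm (x - y) + (2 * L)\<^sup>2 * (\<eta> (Suc k))\<^sup>2"
      using dist_gd_step_sq_le[OF S \<open>x \<in> X\<close> \<open>y \<in> X\<close> \<eta>(1)] by (simp add: x_def y_def)
  qed (use \<open>0 \<le> L\<close> \<eta> in \<open>simp_all add: sum_nonneg\<close>)
  then show ?case
    by (simp add: distrib_left add.assoc)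
qed

lemma norm_A_GD_diff_le:
  assumes S: "S \<in> lists Z" "S' \<in> lists Z" "neighboring S S'" "S \<noteq> []"
    and "x1 \<in> X" "T \<ge> 1" "\<And>t. t \<in> {1..T} \<Longrightarrow> 0 < \<eta> t"
  shows "norm (A_GD X g \<eta> x1 T S - A_GD X g \<eta> x1 T S')
    \<le> (4 * L / length S) * (\<Sum>t=1..T-1. \<eta> t) + 2 * L * sqrt (\<Sum>t=1..T-1. (\<eta> t)\<^sup>2)"
    (is "_ \<le> ?K")
proof -
  have \<eta>: "0 \<le> \<eta> t" if "t \<in> {1..T}" for t
    using assms(7)[OF that] by simp
  have "0 \<le> L"
    using grad_bound_nonneg[OF \<open>x1 \<in> X\<close>] S(1,4) by (auto simp: neq_Nil_conv)
  have bound: "norm (gd_seq X g S \<eta> x1 (t - 1) - gd_seq X g S' \<eta> x1 (t - 1)) \<le> ?K"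
    if "t \<in> {1..T}" for t
  proof -
    have "{1..t - 1} \<subseteq> {1..T - 1}"
      using that by auto
    then have "(\<Sum>s=1..t-1. \<eta> s) \<le> (\<Sum>s=1..T-1. \<eta> s)" "(\<Sum>s=1..t-1. (\<eta> s)\<^sup>2) \<le> (\<Sum>s=1..T-1. (\<eta> s)\<^sup>2)"
      using \<eta> by (auto intro!: sum_mono2)
    then have "(4 * L / length S) * (\<Sum>s=1..t-1. \<eta> s) + 2 * L * sqrt (\<Sum>s=1..t-1. (\<eta> s)\<^sup>2) \<le> ?K"
      using \<open>0 \<le> L\<close> by (intro add_mono mult_left_mono real_sqrt_le_mono) auto
    moreover have "norm (gd_seq X g S \<eta> x1 (t - 1) - gd_seq X g S' \<eta> x1 (t - 1))
      \<le> (4 * L / length S) * (\<Sum>s=1..t-1. \<eta> s) + 2 * L * sqrt (\<Sum>s=1..t-1. (\<eta> s)\<^sup>2)"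
      by (rule dist_gd_seq_le[OF S \<open>x1 \<in> X\<close>]) (use \<eta> that in auto)
    ultimately show ?thesis
      by linarith
  qed
  have A_GD_diff: "A_GD X g \<eta> x1 T S - A_GD X g \<eta> x1 T S'
    = (1 / sum \<eta> {1..T}) *\<^sub>R (\<Sum>t=1..T. \<eta> t *\<^sub>R (gd_seq X g S \<eta> x1 (t - 1) - gd_seq X g S' \<eta> x1 (t - 1)))"
    by (simp add: A_GD_def scaleR_diff_right sum_subtractf)
  show ?thesis
    unfolding A_GD_diff
  proof (rule weighted_average_norm_le)
    show "0 < sum \<eta> {1..T}"
      using assms(6,7) by (intro sum_pos) auto
    show "0 \<le> \<eta> t" if "t \<in> {1..T}" for t
      using that by (rule \<eta>)
    show "norm (gd_seq X g S \<eta> x1 (t - 1) - gd_seq X g S' \<eta> x1 (t - 1)) \<le> ?K" if "t \<in> {1..T}" for t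
      using that by (rule bound)
  qed
qed

end

theorem theorem3p2:
  fixes X :: "'a::euclidean_space set" and Z :: "'z set"
    and f :: "'a \<Rightarrow> 'z \<Rightarrow> real" and g :: "'a \<Rightarrow> 'z \<Rightarrow> 'a"
    and R L :: real and \<eta> :: "nat \<Rightarrow> real" and x1 :: 'a and n T :: nat
  assumes "compact X" and "convex X" and "X \<subseteq> cball 0 R"
    and "x1 \<in> X"
    and "\<And>z. z \<in> Z \<Longrightarrow> convex_on X (\<lambda>x. f x z)"
    and "\<And>z. z \<in> Z \<Longrightarrow> \<exists>U. open U \<and> X \<subseteq> U \<and> L-lipschitz_on U (\<lambda>x. f x z)"
    and "\<And>x z. x \<in> X \<Longrightarrow> z \<in> Z \<Longrightarrow> is_subgradient X (\<lambda>y. f y z) x (g x z)"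
    and "\<And>x z. x \<in> X \<Longrightarrow> z \<in> Z \<Longrightarrow> norm (g x z) \<le> L"
    and "n \<ge> 1" and "T \<ge> 1"
    and "\<And>t. t \<in> {1..T} \<Longrightarrow> \<eta> t > 0"
  shows "\<forall>S S'. S \<in> lists Z \<and> S' \<in> lists Z \<and> length S = n \<and> length S' = n \<and> neighboring S S' \<longrightarrow>
           norm (A_GD X g \<eta> x1 T S - A_GD X g \<eta> x1 T S')
             \<le> min (2 * R) (4 * L * ((1 / real n) * (\<Sum>t=1..T-1. \<eta> t) + sqrt (\<Sum>t=1..T-1. (\<eta> t)\<^sup>2)))"
proof (intro allI impI, elim conjE)
  fix S S' :: "'z list"
  assume S: "S \<in> lists Z" "S' \<in> lists Z" "length S = n" "length S' = n" "neighboring S S'"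
  have "closed X"
    using \<open>compact X\<close> by (rule compact_imp_closed)
  have "S \<noteq> []"
    using S(3) \<open>n \<ge> 1\<close> by auto
  \<comment> \<open>Convexity and Lipschitz continuity of f are used only through the subgradient
    inequality and the bound L on g.\<close>
  interpret gd_stability X Z f g L
    using \<open>closed X\<close> assms(2,7,8) by unfold_locales
  have "0 \<le> L"
    using grad_bound_nonneg[OF \<open>x1 \<in> X\<close>] S(1) \<open>S \<noteq> []\<close> by (auto simp: neq_Nil_conv)
  have R: "norm (A_GD X g \<eta> x1 T S0) \<le> R" for S0
    using \<open>closed X\<close> assms(3,4,10,11) by (rule norm_A_GD_le)
  have "norm (A_GD X g \<eta> x1 T S - A_GD X g \<eta> x1 T S') \<le> 2 * R"
    using R[of S] R[of S'] norm_triangle_ineq4[of "A_GD X g \<eta> x1 T S" "A_GD X g \<eta> x1 T S'"] by linarith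
  moreover have "norm (A_GD X g \<eta> x1 T S - A_GD X g \<eta> x1 T S')
    \<le> (4 * L / n) * (\<Sum>t=1..T-1. \<eta> t) + 2 * L * sqrt (\<Sum>t=1..T-1. (\<eta> t)\<^sup>2)"
    using norm_A_GD_diff_le[OF S(1,2,5) \<open>S \<noteq> []\<close> assms(4,10,11)] S(3) by simp
  moreover have "(4 * L / n) * (\<Sum>t=1..T-1. \<eta> t) + 2 * L * sqrt (\<Sum>t=1..T-1. (\<eta> t)\<^sup>2)
    \<le> 4 * L * ((1 / real n) * (\<Sum>t=1..T-1. \<eta> t) + sqrt (\<Sum>t=1..T-1. (\<eta> t)\<^sup>2))"
    using \<open>0 \<le> L\<close> by (simp add: distrib_left sum_nonneg)
  ultimately show "norm (A_GD X g \<eta> x1 T S - A_GD X g \<eta> x1 T S')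
    \<le> min (2 * R) (4 * L * ((1 / real n) * (\<Sum>t=1..T-1. \<eta> t) + sqrt (\<Sum>t=1..T-1. (\<eta> t)\<^sup>2)))"
    by simp
qed

end
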